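(* For any $X_0,X_1\in2^\omega$, the map $r\mapsto\operatorname{Mix}(X_0,X_1,r)$ from $[0,1]$ to $2^\omega$ is continuous with respect to the Besicovitch pseudometric $d$ on $2^\omega$.
   Context: $d(X,Y)=\limsup_{n}|\{m<n:X(m)\ne Y(m)\}|/n$. For $X,Y\in2^\omega$, $(X\oplus Y)(2n)=X(n)$, $(X\oplus Y)(2n+1)=Y(n)$. The map $b:[0,1]\to2^\omega$ is defined recursively by $b(0)=0^\omega$, $b(1)=1^\omega$, $b(r)=0^\omega\oplus b(2r)$ for $0<r\le1/2$, $b(r)=b(2r-1)\oplus1^\omega$ for $1/2\le r<1$. Chunks: $n_j=\sum_{i<j}i$, $I_j=[n_j,n_{j+1})$. $\operatorname{Mix}(X_0,X_1,r)$ is the sequence whose restriction to $I_j$ equals $X_{b(r)(j)}\restriction I_j$ for every $j$. *)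

theory Defs
  imports "HOL-Analysis.Analysis" "HOL-Library.Liminf_Limsup"
begin

text \<open>Elements of Cantor space 2^omega are modelled as nat \<Rightarrow> bool (False = 0, True = 1).\<close>

definition besi_d :: "(nat \<Rightarrow> bool) \<Rightarrow> (nat \<Rightarrow> bool) \<Rightarrow> ereal" where
  "besi_d X Y = limsup (\<lambda>n. ereal (real (card {m. m < n \<and> X m \<noteq> Y m}) / real n))"

definition join :: "(nat \<Rightarrow> bool) \<Rightarrow> (nat \<Rightarrow> bool) \<Rightarrow> (nat \<Rightarrow> bool)" where
  "join X Y = (\<lambda>k. if even k then X (k div 2) else Y (k div 2))"

definition b_spec :: "(real \<Rightarrow> nat \<Rightarrow> bool) \<Rightarrow> bool" where
  "b_spec f \<longleftrightarrow>
     f 0 = (\<lambda>_. False) \<and> f 1 = (\<lambda>_. True) \<and>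
     (\<forall>r. 0 < r \<and> r \<le> 1/2 \<longrightarrow> f r = join (\<lambda>_. False) (f (2*r))) \<and>
     (\<forall>r. 1/2 \<le> r \<and> r < 1 \<longrightarrow> f r = join (f (2*r - 1)) (\<lambda>_. True)) \<and>
     (\<forall>r. r \<notin> {0..1} \<longrightarrow> f r = (\<lambda>_. False))"

definition bmap :: "real \<Rightarrow> nat \<Rightarrow> bool" where
  "bmap = (THE f. b_spec f)"

definition nchunk :: "nat \<Rightarrow> nat" where
  "nchunk j = (\<Sum>i<j. i)"

definition Mix :: "(nat \<Rightarrow> bool) \<Rightarrow> (nat \<Rightarrow> bool) \<Rightarrow> real \<Rightarrow> (nat \<Rightarrow> bool)" where
  "Mix X0 X1 r = (THE Z. \<forall>j. \<forall>m \<in> {nchunk j ..< nchunk (Suc j)}.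
       Z m = (if bmap r j then X1 m else X0 m))"

end

theory Submission
  imports Defs
begin

text \<open>The recursion defining b is solved by thresholds: there are dyadic numbers
  threshold k in (0,1], with threshold 0 = 1, threshold (2i) = (1 + threshold i)/2 and
  threshold (2i+1) = threshold i / 2, such that b(r)(k) holds iff threshold k \<le> r.
  These thresholds are well distributed: among the first J of them, the number lying in
  [0,x] is xJ up to an error of 3 sqrt J, by induction along the halving recursion. So b(r)
  and b(s) disagree on at most |s - r| J + 6 sqrt J of the first J chunks. The first n
  positions meet about sqrt (2n) chunks, each shorter than that, hence Mix X0 X1 s and
  Mix X0 X1 r differ on at most 4 |s - r| n + O(n^(3/4)) of them, and d is at most 4 |s - r|.\<close>

lemma nat_parity_cases [case_names even odd]:
  fixes k :: nat
  obtains (even) i where "k = 2 * i" | (odd) i where "k = Suc (2 * i)"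
  by (metis Suc_eq_plus1 evenE oddE)

function threshold :: "nat \<Rightarrow> real" where
  "threshold 0 = 1"
| "threshold (Suc k) =
     (if even (Suc k) then (1 + threshold (Suc k div 2)) / 2 else threshold (Suc k div 2) / 2)"
  by pat_completeness auto
termination by (relation "Wellfounded.measure id") (auto, presburger)

declare threshold.simps(2)[simp del]

lemma threshold_even: "threshold (2 * i) = (1 + threshold i) / 2"
  by (cases i) (simp_all add: threshold.simps(2)[of "Suc (2 * _)"])

lemma threshold_odd: "threshold (Suc (2 * i)) = threshold i / 2"
  by (simp add: threshold.simps(2))

lemma threshold_pos: "0 < threshold k" and threshold_le_1: "threshold k \<le> 1"
proof -
  have "0 < threshold k \<and> threshold k \<le> 1"
  proof (induction k rule: less_induct)
    case (less k)
    show ?case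
    proof (cases k rule: nat_parity_cases)
      case (even i)
      then show ?thesis
        using less.IH[of i] by (cases "i = 0") (auto simp: threshold_even)
    next
      case (odd i)
      then show ?thesis
        using less.IH[of i] by (simp add: threshold_odd)
    qed
  qed
  then show "0 < threshold k" "threshold k \<le> 1" by auto
qed

lemma join_even [simp]: "join X Y (2 * i) = X i"
  and join_odd [simp]: "join X Y (Suc (2 * i)) = Y i"
  by (simp_all add: join_def)

lemma b_spec_even:
  assumes "b_spec f" "r \<in> {0..1}"
  shows "f r (2 * i) \<longleftrightarrow> 1/2 \<le> r \<and> f (2 * r - 1) i"
proof -
  consider "r = 0" | "0 < r" "r < 1/2" | "1/2 \<le> r" "r < 1" | "r = 1"
    using assms(2) by fastforce
  then show ?thesis
    by cases (use assms(1) in \<open>simp_all add: b_spec_def\<close>)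
qed

lemma b_spec_odd:
  assumes "b_spec f" "r \<in> {0..1}"
  shows "f r (Suc (2 * i)) \<longleftrightarrow> 1/2 \<le> r \<or> f (2 * r) i"
proof -
  consider "r = 0" | "0 < r" "r < 1/2" | "2 * r = 1" | "1/2 < r" "r < 1" | "r = 1"
    using assms(2) by fastforce
  then show ?thesis
    by cases (use assms(1) in \<open>simp_all add: b_spec_def\<close>)
qed

lemma b_spec_zero:
  assumes f: "b_spec f" and r: "r \<in> {0..1}"
  shows "f r 0 \<longleftrightarrow> r = 1"
proof -
  \<comment> \<open>At index 0 the even-index equation is circular; iterating it doubles the
    distance 1 - r until r drops below 1/2.\<close>
  have "\<not> f r 0" if "r \<in> {0..1}" "1 / 2 ^ N \<le> 1 - r" for N r
    using that
  proof (induction N arbitrary: r)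
    case 0
    then show ?case using b_spec_even[OF f, of r 0] by simp
  next
    case (Suc N)
    show ?case
    proof (cases "r < 1/2")
      case False
      then have "\<not> f (2 * r - 1) 0"
        using Suc.prems by (intro Suc.IH) (auto simp: field_simps)
      then show ?thesis using b_spec_even[OF f, of r 0] Suc.prems by simp
    qed (use b_spec_even[OF f, of r 0] Suc.prems in simp)
  qed
  moreover have "f 1 0" using f by (simp add: b_spec_def)
  moreover obtain N where "1 / 2 ^ N < 1 - r" if "r < 1"
    using real_arch_pow_inv[of "1 - r" "1/2"] by (auto simp: power_one_over)
  ultimately show ?thesis using r by (cases "r = 1") (auto intro: less_imp_le)
qed

lemma b_spec_unique:
  assumes f: "b_spec f" and g: "b_spec g"
  shows "f = g"
proof (intro ext)
  fix r k
  show "f r k = g r k"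
  proof (induction k arbitrary: r rule: less_induct)
    case (less k)
    show ?case
    proof (cases "r \<in> {0..1}")
      case r: True
      show ?thesis
      proof (cases k rule: nat_parity_cases)
        case (even i)
        show ?thesis
        proof (cases "i = 0")
          case True
          then show ?thesis using even b_spec_zero[OF f r] b_spec_zero[OF g r] by simp
        next
          case False
          then show ?thesis
            using even less.IH[of i] b_spec_even[OF f r] b_spec_even[OF g r] by simp
        qed
      next
        case (odd i)
        then show ?thesis
          using less.IH[of i] b_spec_odd[OF f r] b_spec_odd[OF g r] by simp
      qed
    next
      case False
      then show ?thesis using f g by (simp add: b_spec_def)
    qed
  qed
qed

lemma join_eqI:
  assumes "\<And>i. Z (2 * i) = X i" "\<And>i. Z (Suc (2 * i)) = Y i"
  shows "Z = join X Y"
proof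
  fix k
  show "Z k = join X Y k"
    by (cases k rule: nat_parity_cases) (simp_all add: assms)
qed

definition threshold_bits :: "real \<Rightarrow> nat \<Rightarrow> bool" where
  "threshold_bits r k \<longleftrightarrow> r \<in> {0..1} \<and> threshold k \<le> r"

lemma b_spec_threshold_bits: "b_spec threshold_bits"
  unfolding b_spec_def
proof (intro conjI allI impI)
  show "threshold_bits 0 = (\<lambda>_. False)" "threshold_bits 1 = (\<lambda>_. True)"
    using threshold_pos threshold_le_1 by (auto simp: threshold_bits_def fun_eq_iff not_le)
  fix r :: real
  show "threshold_bits r = join (\<lambda>_. False) (threshold_bits (2 * r))" if "0 < r \<and> r \<le> 1/2"
  proof (rule join_eqI)
    fix i
    show "threshold_bits r (2 * i) = False"
      using that threshold_pos[of i] by (simp add: threshold_bits_def threshold_even)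
    show "threshold_bits r (Suc (2 * i)) = threshold_bits (2 * r) i"
      using that by (auto simp: threshold_bits_def threshold_odd)
  qed
  show "threshold_bits r = join (threshold_bits (2 * r - 1)) (\<lambda>_. True)" if "1/2 \<le> r \<and> r < 1"
  proof (rule join_eqI)
    fix i
    show "threshold_bits r (2 * i) = threshold_bits (2 * r - 1) i"
      using that threshold_le_1[of i] by (auto simp: threshold_bits_def threshold_even)
    show "threshold_bits r (Suc (2 * i)) = True"
      using that threshold_le_1[of i] by (simp add: threshold_bits_def threshold_odd)
  qed
  show "threshold_bits r = (\<lambda>_. False)" if "r \<notin> {0..1}"
    using that by (auto simp: threshold_bits_def fun_eq_iff)
qed

lemma bmap_eq_threshold_bits: "bmap = threshold_bits"
  unfolding bmap_def
  using b_spec_threshold_bits b_spec_unique by blast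

lemma bmap_iff: "r \<in> {0..1} \<Longrightarrow> bmap r k \<longleftrightarrow> threshold k \<le> r"
  by (simp add: bmap_eq_threshold_bits threshold_bits_def)

definition threshold_count :: "real \<Rightarrow> nat \<Rightarrow> nat" where
  "threshold_count x n = card {k. k < n \<and> threshold k \<le> x}"

lemma threshold_count_rec:
  "threshold_count x n = threshold_count (2 * x - 1) ((n + 1) div 2) + threshold_count (2 * x) (n div 2)"
proof -
  let ?A = "{i. i < (n + 1) div 2 \<and> threshold i \<le> 2 * x - 1}"
  let ?B = "{i. i < n div 2 \<and> threshold i \<le> 2 * x}"
  have "{k. k < n \<and> threshold k \<le> x} = (\<lambda>i. 2 * i) ` ?A \<union> (\<lambda>i. Suc (2 * i)) ` ?B"
  proof (rule set_eqI)
    fix k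
    show "k \<in> {k. k < n \<and> threshold k \<le> x} \<longleftrightarrow> k \<in> (\<lambda>i. 2 * i) ` ?A \<union> (\<lambda>i. Suc (2 * i)) ` ?B"
      by (cases k rule: nat_parity_cases)
        (auto simp: threshold_even threshold_odd Suc_double_not_eq_double double_not_eq_Suc_double)
  qed
  moreover have "(\<lambda>i. 2 * i) ` ?A \<inter> (\<lambda>i. Suc (2 * i)) ` ?B = {}" by auto presburger
  moreover have "inj (\<lambda>i::nat. 2 * i)" "inj (\<lambda>i::nat. Suc (2 * i))" by (simp_all add: inj_def)
  ultimately show ?thesis
    unfolding threshold_count_def
    by (simp add: card_Un_disjoint card_image inj_on_subset[of _ UNIV])
qed

lemma threshold_count_nonpos:
  assumes "x \<le> 0" shows "threshold_count x n = 0"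
proof -
  have "\<not> threshold k \<le> x" for k using threshold_pos[of k] assms by linarith
  then show ?thesis by (simp add: threshold_count_def)
qed

lemma threshold_count_ge_1:
  assumes "1 \<le> x" shows "threshold_count x n = n"
proof -
  have "threshold k \<le> x" for k using threshold_le_1[of k] assms by linarith
  then show ?thesis by (simp add: threshold_count_def)
qed

lemma threshold_count_le: "threshold_count x n \<le> n"
  unfolding threshold_count_def
  using card_mono[of "{..<n}" "{k. k < n \<and> threshold k \<le> x}"] by auto

lemma threshold_count_error_step:
  assumes x: "x \<in> {0..1}"
  obtains y h where "y \<in> {0..1}" "2 * h \<le> n + 1"
    "\<bar>real (threshold_count x n) - x * n\<bar> \<le> \<bar>real (threshold_count y h) - y * h\<bar> + 1/2"
proof -
  have shift: "\<bar>a + e\<bar> \<le> \<bar>a\<bar> + 1/2" if "\<bar>e\<bar> \<le> 1/2" for a e :: real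
    using abs_triangle_ineq[of a e] that by linarith
  show thesis
  proof (cases "x \<le> 1/2")
    case True
    let ?h = "n div 2"
    have "real (threshold_count x n) - x * n
        = (real (threshold_count (2 * x) ?h) - 2 * x * ?h) + (2 * x * ?h - x * n)"
      using threshold_count_rec[of x n] threshold_count_nonpos[of "2 * x - 1"] True by simp
    moreover have "\<bar>2 * x * ?h - x * n\<bar> \<le> 1/2"
      using x True by (cases n rule: nat_parity_cases) (auto simp: algebra_simps)
    ultimately have "\<bar>real (threshold_count x n) - x * n\<bar>
        \<le> \<bar>real (threshold_count (2 * x) ?h) - 2 * x * ?h\<bar> + 1/2"
      using shift by presburger
    then show thesis using that[of "2 * x" ?h] x True by simp
  next
    case False
    let ?h = "(n + 1) div 2"
    have "real (threshold_count x n) - x * n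
        = (real (threshold_count (2 * x - 1) ?h) - (2 * x - 1) * ?h)
          + ((2 * x - 1) * ?h + n div 2 - x * n)"
      using threshold_count_rec[of x n] threshold_count_ge_1[of "2 * x"] False by simp
    moreover have "\<bar>(2 * x - 1) * ?h + n div 2 - x * n\<bar> \<le> 1/2"
      using x False by (cases n rule: nat_parity_cases) (auto simp: algebra_simps)
    ultimately have "\<bar>real (threshold_count x n) - x * n\<bar>
        \<le> \<bar>real (threshold_count (2 * x - 1) ?h) - (2 * x - 1) * ?h\<bar> + 1/2"
      using shift by presburger
    then show thesis using that[of "2 * x - 1" ?h] x False by simp
  qed
qed

lemma sqrt_half_succ_le:
  fixes n :: real
  assumes "2 \<le> n"
  shows "3 * sqrt ((n + 1) / 2) + 1/2 \<le> 3 * sqrt n"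
proof -
  have "0 \<le> (sqrt n - 1)\<^sup>2" by simp
  then have "2 * sqrt n \<le> n + 1" using assms by (simp add: power2_eq_square algebra_simps)
  moreover have "(sqrt n - 1/6)\<^sup>2 = n - sqrt n / 3 + 1/36"
    using assms by (simp add: power2_eq_square algebra_simps)
  ultimately have "(n + 1) / 2 \<le> (sqrt n - 1/6)\<^sup>2"
    using assms by (simp add: field_simps)
  moreover have "1 \<le> sqrt n" using assms by simp
  ultimately have "sqrt ((n + 1) / 2) \<le> sqrt n - 1/6" by (intro real_le_lsqrt) linarith+
  then show ?thesis by simp
qed

lemma threshold_count_discrepancy:
  "x \<in> {0..1} \<Longrightarrow> \<bar>real (threshold_count x n) - x * n\<bar> \<le> 3 * sqrt n"
proof (induction n arbitrary: x rule: less_induct)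
  case (less n)
  show ?case
  proof (cases "n \<le> 1")
    case True
    then show ?thesis
      using threshold_count_le[of x n] less.prems by (cases n) (auto simp: threshold_count_def)
  next
    case False
    obtain y h where y: "y \<in> {0..1}" and h: "2 * h \<le> n + 1"
      and step: "\<bar>real (threshold_count x n) - x * n\<bar> \<le> \<bar>real (threshold_count y h) - y * h\<bar> + 1/2"
      using threshold_count_error_step[OF less.prems] .
    have "sqrt h \<le> sqrt ((real n + 1) / 2)" using h by (simp add: real_sqrt_le_mono)
    moreover have "\<bar>real (threshold_count y h) - y * h\<bar> \<le> 3 * sqrt h"
      using h False y by (intro less.IH) auto
    moreover have "3 * sqrt ((real n + 1) / 2) + 1/2 \<le> 3 * sqrt n"
      using False by (intro sqrt_half_succ_le) simp
    ultimately show ?thesis using step by linarith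
  qed
qed

lemma nchunk_0 [simp]: "nchunk 0 = 0"
  and nchunk_Suc: "nchunk (Suc j) = nchunk j + j"
  by (simp_all add: nchunk_def)

lemma nchunk_mono: "j \<le> k \<Longrightarrow> nchunk j \<le> nchunk k"
  unfolding nchunk_def by (rule sum_mono2) auto

lemma nchunk_double: "2 * nchunk j + j = j * j"
  by (induction j) (auto simp: nchunk_Suc)

definition chunk_index :: "nat \<Rightarrow> nat" where
  "chunk_index m = (LEAST j. m < nchunk (Suc j))"

lemma chunk_index_upper: "m < nchunk (Suc (chunk_index m))"
  unfolding chunk_index_def by (rule LeastI[of _ "Suc m"]) (simp add: nchunk_Suc)

lemma chunk_index_lower: "nchunk (chunk_index m) \<le> m"
proof (cases "chunk_index m")
  case (Suc j)
  then have "\<not> m < nchunk (Suc j)"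
    unfolding chunk_index_def by (intro not_less_Least) simp
  then show ?thesis using Suc by simp
qed simp

lemma chunk_index_ge: "nchunk j \<le> m \<Longrightarrow> j \<le> chunk_index m"
  using chunk_index_upper[of m] nchunk_mono[of "Suc (chunk_index m)" j] by linarith

lemma chunk_index_eqI: "nchunk j \<le> m \<Longrightarrow> m < nchunk (Suc j) \<Longrightarrow> chunk_index m = j"
  using chunk_index_ge[of j m] unfolding chunk_index_def by (meson Least_le le_antisym)

lemma chunk_index_mono: "m \<le> n \<Longrightarrow> chunk_index m \<le> chunk_index n"
  unfolding chunk_index_def[of m] by (rule Least_le) (use chunk_index_upper[of n] in simp)

lemma filterlim_chunk_index: "filterlim chunk_index at_top sequentially"
  unfolding filterlim_at_top eventually_sequentially
  using chunk_index_ge by blast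

lemma Mix_apply: "Mix X0 X1 r m = (if bmap r (chunk_index m) then X1 m else X0 m)"
proof -
  let ?Z = "\<lambda>m. if bmap r (chunk_index m) then X1 m else X0 m"
  have "Mix X0 X1 r = ?Z"
    unfolding Mix_def
  proof (rule the_equality)
    show "\<forall>j. \<forall>m\<in>{nchunk j..<nchunk (Suc j)}. ?Z m = (if bmap r j then X1 m else X0 m)"
      using chunk_index_eqI by auto
  next
    fix Z assume Z: "\<forall>j. \<forall>m\<in>{nchunk j..<nchunk (Suc j)}. Z m = (if bmap r j then X1 m else X0 m)"
    show "Z = ?Z"
    proof
      fix m
      show "Z m = ?Z m"
        using Z chunk_index_lower[of m] chunk_index_upper[of m] by auto
    qed
  qed
  then show ?thesis by simp
qed

lemma card_Mix_disagree_le: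
  "card {m. m < n \<and> Mix X0 X1 s m \<noteq> Mix X0 X1 r m}
     \<le> card {j. j < Suc (chunk_index n) \<and> bmap s j \<noteq> bmap r j} * Suc (chunk_index n)"
proof -
  let ?J = "Suc (chunk_index n)"
  let ?A = "{m. m < n \<and> bmap s (chunk_index m) \<noteq> bmap r (chunk_index m)}"
  let ?D = "{j. j < ?J \<and> bmap s j \<noteq> bmap r j}"
  define pos where "pos m = (chunk_index m, m - nchunk (chunk_index m))" for m
  have "inj_on pos ?A"
    by (rule inj_onI) (metis pos_def chunk_index_lower le_add_diff_inverse prod.inject)
  moreover have "pos ` ?A \<subseteq> ?D \<times> {..<?J}"
  proof
    fix p assume "p \<in> pos ` ?A"
    then obtain m where m: "m \<in> ?A" "p = pos m" by blast
    then have "chunk_index m \<le> chunk_index n" by (intro chunk_index_mono) simp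
    moreover have "m - nchunk (chunk_index m) < chunk_index m"
      using chunk_index_upper[of m] chunk_index_lower[of m] by (simp add: nchunk_Suc)
    ultimately show "p \<in> ?D \<times> {..<?J}" using m by (auto simp: pos_def)
  qed
  ultimately have "card ?A \<le> card (?D \<times> {..<?J})"
    by (intro card_inj_on_le) auto
  moreover have "{m. m < n \<and> Mix X0 X1 s m \<noteq> Mix X0 X1 r m} \<subseteq> ?A"
    by (auto simp: Mix_apply split: if_splits)
  then have "card {m. m < n \<and> Mix X0 X1 s m \<noteq> Mix X0 X1 r m} \<le> card ?A"
    by (intro card_mono) auto
  ultimately show ?thesis by (simp add: card_cartesian_product)
qed

lemma card_bmap_disagree_le:
  assumes r: "r \<in> {0..1}" and s: "s \<in> {0..1}"
  shows "real (card {j. j < J \<and> bmap s j \<noteq> bmap r j}) \<le> \<bar>s - r\<bar> * J + 6 * sqrt J"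
proof -
  define lo where "lo = min r s"
  define hi where "hi = max r s"
  have "{j. j < J \<and> bmap s j \<noteq> bmap r j}
      = {j. j < J \<and> threshold j \<le> hi} - {j. j < J \<and> threshold j \<le> lo}"
    using r s by (auto simp: bmap_iff lo_def hi_def)
  moreover have "{j. j < J \<and> threshold j \<le> lo} \<subseteq> {j. j < J \<and> threshold j \<le> hi}"
    by (auto simp: lo_def hi_def)
  ultimately have "real (card {j. j < J \<and> bmap s j \<noteq> bmap r j})
      = real (threshold_count hi J) - real (threshold_count lo J)"
    by (simp add: threshold_count_def card_Diff_subset card_mono)
  moreover have "\<bar>real (threshold_count hi J) - hi * J\<bar> \<le> 3 * sqrt J"
    and "\<bar>real (threshold_count lo J) - lo * J\<bar> \<le> 3 * sqrt J"
    using r s by (auto simp: lo_def hi_def intro!: threshold_count_discrepancy)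
  moreover have "hi - lo = \<bar>s - r\<bar>" by (auto simp: lo_def hi_def)
  ultimately show ?thesis by (auto simp: algebra_simps abs_le_iff)
qed

lemma chunk_index_square_le:
  assumes "5 \<le> chunk_index n"
  shows "(Suc (chunk_index n))\<^sup>2 \<le> 4 * n"
proof -
  let ?K = "chunk_index n"
  have "?K * ?K \<le> 2 * n + ?K"
    using nchunk_double[of ?K] chunk_index_lower[of n] by linarith
  moreover have "5 * ?K \<le> ?K * ?K" using assms by simp
  moreover have "(Suc ?K)\<^sup>2 = ?K * ?K + 2 * ?K + 1" by (simp add: power2_eq_square)
  ultimately show ?thesis using assms by linarith
qed

lemma Mix_disagree_density_le:
  assumes r: "r \<in> {0..1}" and s: "s \<in> {0..1}" and n: "5 \<le> chunk_index n"
  shows "real (card {m. m < n \<and> Mix X0 X1 s m \<noteq> Mix X0 X1 r m}) / n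
           \<le> 4 * \<bar>s - r\<bar> + 24 / sqrt (Suc (chunk_index n))"
proof -
  define J where "J = real (Suc (chunk_index n))"
  have J: "J * J \<le> 4 * n" "0 < J"
    using of_nat_mono[OF chunk_index_square_le[OF n], where 'a=real]
    by (simp_all add: J_def power2_eq_square algebra_simps)
  then have "0 < real n" using mult_pos_pos[OF J(2) J(2)] by linarith
  have "real (card {m. m < n \<and> Mix X0 X1 s m \<noteq> Mix X0 X1 r m})
      \<le> real (card {j. j < Suc (chunk_index n) \<and> bmap s j \<noteq> bmap r j}) * J"
    using card_Mix_disagree_le[of n X0 X1 s r] unfolding J_def by (metis of_nat_le_iff of_nat_mult)
  also have "\<dots> \<le> (\<bar>s - r\<bar> * J + 6 * sqrt J) * J"
    using card_bmap_disagree_le[OF r s, of "Suc (chunk_index n)"] J(2) unfolding J_def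
    by (intro mult_right_mono) simp_all
  also have "\<dots> = \<bar>s - r\<bar> * (J * J) + 6 * (J * J) / sqrt J"
    using J by (simp add: field_simps real_div_sqrt)
  also have "\<dots> \<le> \<bar>s - r\<bar> * (4 * n) + 6 * (4 * n) / sqrt J"
    using J by (intro add_mono mult_left_mono divide_right_mono) auto
  finally show ?thesis
    using \<open>0 < real n\<close> by (simp add: J_def divide_le_eq algebra_simps)
qed

lemma besi_d_Mix_le:
  assumes r: "r \<in> {0..1}" and s: "s \<in> {0..1}"
  shows "besi_d (Mix X0 X1 s) (Mix X0 X1 r) \<le> ereal (4 * \<bar>s - r\<bar>)"
proof -
  let ?bound = "\<lambda>n. 4 * \<bar>s - r\<bar> + 24 / sqrt (Suc (chunk_index n))"
  have "filterlim (\<lambda>n. sqrt (Suc (chunk_index n))) at_top sequentially"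
    by (rule filterlim_compose[OF sqrt_at_top filterlim_compose[OF filterlim_real_sequentially
          filterlim_compose[OF filterlim_Suc filterlim_chunk_index]]])
  then have "(\<lambda>n. 24 / sqrt (Suc (chunk_index n))) \<longlonglongrightarrow> 0"
    by (intro tendsto_divide_0 filterlim_at_top_imp_at_infinity) auto
  then have "?bound \<longlonglongrightarrow> 4 * \<bar>s - r\<bar>"
    using tendsto_add[OF tendsto_const[of "4 * \<bar>s - r\<bar>"]] by fastforce
  then have "limsup (\<lambda>n. ereal (?bound n)) = ereal (4 * \<bar>s - r\<bar>)"
    by (intro lim_imp_Limsup) auto
  moreover have "\<forall>\<^sub>F n in sequentially.
      ereal (real (card {m. m < n \<and> Mix X0 X1 s m \<noteq> Mix X0 X1 r m}) / n) \<le> ereal (?bound n)"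
    using filterlim_chunk_index[unfolded filterlim_at_top, rule_format, of 5]
    by eventually_elim (use Mix_disagree_density_le[OF r s] in simp)
  then have "besi_d (Mix X0 X1 s) (Mix X0 X1 r) \<le> limsup (\<lambda>n. ereal (?bound n))"
    unfolding besi_d_def by (rule Limsup_mono)
  ultimately show ?thesis by simp
qed

theorem lemma2p8:
  fixes X0 X1 :: "nat \<Rightarrow> bool"
  shows "\<forall>r \<in> {0..1::real}. \<forall>\<epsilon>>0. \<exists>\<delta>>0. \<forall>s \<in> {0..1}.
           \<bar>s - r\<bar> < \<delta> \<longrightarrow> besi_d (Mix X0 X1 s) (Mix X0 X1 r) < ereal \<epsilon>"
proof (intro ballI allI impI)
  fix r \<epsilon> :: real
  assume r: "r \<in> {0..1}" and \<epsilon>: "\<epsilon> > 0"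
  show "\<exists>\<delta>>0. \<forall>s\<in>{0..1}. \<bar>s - r\<bar> < \<delta> \<longrightarrow> besi_d (Mix X0 X1 s) (Mix X0 X1 r) < ereal \<epsilon>"
  proof (intro exI[of _ "\<epsilon> / 4"] conjI ballI impI)
    fix s assume s: "s \<in> {0..1}" and "\<bar>s - r\<bar> < \<epsilon> / 4"
    then have "ereal (4 * \<bar>s - r\<bar>) < ereal \<epsilon>" by simp
    then show "besi_d (Mix X0 X1 s) (Mix X0 X1 r) < ereal \<epsilon>"
      using besi_d_Mix_le[OF r s] by (rule le_less_trans[rotated])
  qed (use \<epsilon> in simp)
qed

end
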